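(* Let $D=\mathrm{diag}(1,-1,1,-1,\ldots)=(1,-x)$, $\mathbb{F}^{\rm S}=(1,x(1+x))$, $\mathbb{L}^{\rm S}=(1+2x,x(1+x))$, and write $D(\mathbb{F}^{\rm S})^{-1}D=[r_{ij}]_{i,j\ge0}$ and $D(\mathbb{L}^{\rm S})^{-1}D=[q_{ij}]_{i,j\ge0}$. Then for all positive integers $i,j$ with $i\ge j$: (a) $r_{i,i-j+1}=r_{i-1,i-1}+r_{i-1,i-2}+\cdots+r_{i-1,i-j}$; (b) $q_{i,i-j+1}=q_{i-1,i-1}+q_{i-1,i-2}+\cdots+q_{i-1,i-j}$.
   Context: All matrices are infinite with rows and columns indexed by $0,1,2,\ldots$. For formal power series $g(x)=g_0+g_1x+\cdots$ with $g_0\ne0$ and $f(x)=f_1x+f_2x^2+\cdots$ with $f_1\ne0$, $(g(x),f(x))$ denotes the (Riordan) infinite lower triangular matrix whose $j$-th column has generating function $g(x)f(x)^j$. These matrices form a group under matrix multiplication with $(g,f)(h,l)=(g\cdot h(f),l(f))$. *)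

theory Defs
  imports "HOL-Computational_Algebra.Formal_Power_Series"
begin

text \<open>Infinite matrices are functions nat => nat => 'a (row, column).
  The Riordan array (g,f) has j-th column with generating function g * f^j.\<close>

definition riordan :: "'a::comm_ring_1 fps \<Rightarrow> 'a fps \<Rightarrow> nat \<Rightarrow> nat \<Rightarrow> 'a" where
  "riordan g f i j = fps_nth (g * f ^ j) i"

definition lower_tri :: "(nat \<Rightarrow> nat \<Rightarrow> 'a::zero) \<Rightarrow> bool" where
  "lower_tri A \<longleftrightarrow> (\<forall>i j. i < j \<longrightarrow> A i j = 0)"

text \<open>Product of infinite matrices whose left factor is lower triangular
  (the sum is then finite and agrees with the usual product).\<close>
definition lt_mult :: "(nat \<Rightarrow> nat \<Rightarrow> 'a::comm_ring_1) \<Rightarrow> (nat \<Rightarrow> nat \<Rightarrow> 'a) \<Rightarrow> nat \<Rightarrow> nat \<Rightarrow> 'a" where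
  "lt_mult A B i j = (\<Sum>k\<le>i. A i k * B k j)"

definition id_mat :: "nat \<Rightarrow> nat \<Rightarrow> 'a::comm_ring_1" where
  "id_mat i j = (if i = j then 1 else 0)"

definition mat_inv :: "(nat \<Rightarrow> nat \<Rightarrow> 'a::comm_ring_1) \<Rightarrow> nat \<Rightarrow> nat \<Rightarrow> 'a" where
  "mat_inv A = (THE B. lower_tri B \<and> lt_mult A B = id_mat \<and> lt_mult B A = id_mat)"

end

theory Submission
  imports Defs
begin

text \<open>Both matrices are Riordan arrays A = (g, x(1+x)) with g(0) = 1. Since column k+1 of A
  is x + x^2 times column k, A(n+1,k+1) = A(n,k) + A(n-1,k): deleting the first column of A
  gives (Z + Z^2) A, where Z is the down-shift matrix. Multiplying on the left by the inverse
  B of A shows that B(i+1,m+1) + B(i+1,m+2) = B(i,m). Conjugation by D multiplies B(i,j) by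
  (-1)^(i+j), which turns this into M(i+1,m+1) = M(i,m) + M(i+1,m+2); telescoping along row i,
  starting just above the diagonal where M vanishes, gives the sums.\<close>

lemma sum_atMost_eq_top_plus_lessThan:
  fixes f :: "nat \<Rightarrow> 'a::comm_monoid_add"
  shows "(\<Sum>k\<le>i. f k) = f i + (\<Sum>k<i. f k)"
  by (simp add: lessThan_Suc_atMost[symmetric] add.commute)

lemma lt_mult_add_right:
  "lt_mult A (\<lambda>p m. X p m + Y p m) i j = lt_mult A X i j + lt_mult A Y i j"
  by (simp add: lt_mult_def distrib_left sum.distrib)

lemma lt_mult_column_shift: "lt_mult A (\<lambda>p m. X p (Suc m)) i j = lt_mult A X i (Suc j)"
  by (simp add: lt_mult_def)

lemma lt_mult_left_cancel:
  fixes A X Y :: "nat \<Rightarrow> nat \<Rightarrow> 'a::comm_ring_1"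
  assumes diag: "\<And>i. A i i = 1" and eq: "lt_mult A X = lt_mult A Y"
  shows "X = Y"
proof -
  have "X i j = Y i j" for i j
  proof (induction i arbitrary: j rule: less_induct)
    case (less i)
    have "A i i * X i j + (\<Sum>k<i. A i k * X k j) = A i i * Y i j + (\<Sum>k<i. A i k * Y k j)"
      using fun_cong[OF fun_cong[OF eq, of i], of j]
      by (simp add: lt_mult_def sum_atMost_eq_top_plus_lessThan)
    moreover have "(\<Sum>k<i. A i k * X k j) = (\<Sum>k<i. A i k * Y k j)"
      using less by simp
    ultimately show ?case using diag by simp
  qed
  then show ?thesis by (intro ext)
qed

lemma lt_mult_assoc:
  assumes "lower_tri B"
  shows "lt_mult (lt_mult A B) C = lt_mult A (lt_mult B C)"
proof (intro ext)
  fix i j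
  have inner: "(\<Sum>k\<le>l. B l k * C k j) = (\<Sum>k\<le>i. B l k * C k j)" if "l \<le> i" for l
    using that assms unfolding lower_tri_def by (intro sum.mono_neutral_left) auto
  have "lt_mult A (lt_mult B C) i j = (\<Sum>l\<le>i. \<Sum>k\<le>i. A i l * B l k * C k j)"
    by (simp add: lt_mult_def inner sum_distrib_left mult.assoc)
  also have "\<dots> = (\<Sum>k\<le>i. \<Sum>l\<le>i. A i l * B l k * C k j)"
    by (rule sum.swap)
  also have "\<dots> = lt_mult (lt_mult A B) C i j"
    by (simp add: lt_mult_def sum_distrib_right)
  finally show "lt_mult (lt_mult A B) C i j = lt_mult A (lt_mult B C) i j" by simp
qed

lemma lt_mult_id_left: "lt_mult id_mat C = C"
proof (intro ext)
  fix i j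
  have "lt_mult id_mat C i j = (\<Sum>k\<le>i. if k = i then C i j else 0)"
    unfolding lt_mult_def by (intro sum.cong) (auto simp: id_mat_def)
  then show "lt_mult id_mat C i j = C i j" by simp
qed

lemma lt_mult_id_right: "lower_tri A \<Longrightarrow> lt_mult A id_mat = A"
  unfolding lt_mult_def id_mat_def lower_tri_def
  by (intro ext) (auto simp: if_distrib cong: if_cong)

text \<open>Forward substitution gives an explicit inverse; it is what makes the THE in mat_inv
  well defined for unitriangular matrices.\<close>

function unitri_inv :: "(nat \<Rightarrow> nat \<Rightarrow> 'a::comm_ring_1) \<Rightarrow> nat \<Rightarrow> nat \<Rightarrow> 'a" where
  "unitri_inv A i j =
     (if i < j then 0 else if i = j then 1 else - (\<Sum>k<i. A i k * unitri_inv A k j))"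
  by pat_completeness auto
termination by (relation "measure (\<lambda>(A, i, j). i)") auto

declare unitri_inv.simps[simp del]

lemma lower_tri_unitri_inv: "lower_tri (unitri_inv A)"
  unfolding lower_tri_def by (subst unitri_inv.simps) auto

lemma unitri_inv_diag: "unitri_inv A i i = 1"
  by (subst unitri_inv.simps) auto

lemma lt_mult_unitri_inv_right:
  assumes diag: "\<And>i. A i i = 1"
  shows "lt_mult A (unitri_inv A) = id_mat"
proof (intro ext)
  fix i j
  let ?B = "unitri_inv A"
  have split: "lt_mult A ?B i j = ?B i j + (\<Sum>k<i. A i k * ?B k j)"
    by (simp add: lt_mult_def sum_atMost_eq_top_plus_lessThan diag)
  consider "i < j" | "i = j" | "j < i" by linarith
  then show "lt_mult A ?B i j = id_mat i j"
  proof cases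
    case 1
    then show ?thesis
      using lower_tri_unitri_inv[of A]
      by (simp add: lt_mult_def id_mat_def lower_tri_def)
  next
    case 2
    then have "(\<Sum>k<i. A i k * ?B k j) = 0"
      using lower_tri_unitri_inv[of A] by (intro sum.neutral) (auto simp: lower_tri_def)
    then show ?thesis using 2 split by (simp add: unitri_inv_diag id_mat_def)
  next
    case 3
    then have "?B i j = - (\<Sum>k<i. A i k * ?B k j)"
      by (subst unitri_inv.simps) auto
    then show ?thesis using 3 split by (simp add: id_mat_def)
  qed
qed

lemma lt_mult_unitri_inv_left:
  assumes lt: "lower_tri A" and diag: "\<And>i. A i i = 1"
  shows "lt_mult (unitri_inv A) A = id_mat"
proof -
  let ?B = "unitri_inv A"
  let ?C = "unitri_inv ?B"
  have BC: "lt_mult ?B ?C = id_mat"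
    by (rule lt_mult_unitri_inv_right) (rule unitri_inv_diag)
  have "A = lt_mult (lt_mult A ?B) ?C"
    using lt lower_tri_unitri_inv[of A] by (simp add: lt_mult_assoc BC lt_mult_id_right)
  also have "\<dots> = ?C"
    by (simp add: lt_mult_unitri_inv_right[of A, OF diag] lt_mult_id_left)
  finally show ?thesis using BC by simp
qed

lemma mat_inv_eq_unitri_inv:
  assumes lt: "lower_tri A" and diag: "\<And>i. A i i = 1"
  shows "mat_inv A = unitri_inv A"
  unfolding mat_inv_def
proof (rule the_equality)
  show "lower_tri (unitri_inv A) \<and> lt_mult A (unitri_inv A) = id_mat
      \<and> lt_mult (unitri_inv A) A = id_mat"
    using lower_tri_unitri_inv lt_mult_unitri_inv_right[of A, OF diag]
      lt_mult_unitri_inv_left[OF lt diag] by blast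
next
  fix B assume "lower_tri B \<and> lt_mult A B = id_mat \<and> lt_mult B A = id_mat"
  then have "lt_mult A B = lt_mult A (unitri_inv A)"
    using lt_mult_unitri_inv_right[of A, OF diag] by simp
  then show "B = unitri_inv A" by (rule lt_mult_left_cancel[of A, OF diag])
qed

text \<open>The matrix Z X, where Z is the down-shift matrix with ones on the subdiagonal.\<close>

definition shift_down :: "(nat \<Rightarrow> nat \<Rightarrow> 'a::zero) \<Rightarrow> nat \<Rightarrow> nat \<Rightarrow> 'a" where
  "shift_down X i j = (case i of 0 \<Rightarrow> 0 | Suc i' \<Rightarrow> X i' j)"

lemma shift_down_id_mat:
  "shift_down id_mat i j = id_mat i (Suc j)"
  "shift_down (shift_down id_mat) i j = id_mat i (Suc (Suc j))"
  by (cases i, simp_all add: shift_down_def id_mat_def split: nat.split)+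

lemma lt_mult_shift_down_left:
  assumes "lower_tri A"
  shows "lt_mult (shift_down A) X = shift_down (lt_mult A X)"
proof (intro ext)
  fix i j
  show "lt_mult (shift_down A) X i j = shift_down (lt_mult A X) i j"
  proof (cases i)
    case (Suc n)
    have "A n (Suc n) = 0" using assms by (simp add: lower_tri_def)
    then show ?thesis using Suc by (simp add: lt_mult_def shift_down_def)
  qed (simp add: lt_mult_def shift_down_def)
qed

lemma lt_mult_shift_down_right:
  assumes lt: "lower_tri A"
    and col: "\<And>n k. A (Suc n) (Suc k) = A n k + shift_down A n k"
  shows "lt_mult A (shift_down X) i j
    = shift_down (lt_mult A X) i j + shift_down (shift_down (lt_mult A X)) i j"
proof (cases i)
  case (Suc n)
  have "lt_mult A (shift_down X) (Suc n) j = (\<Sum>k\<le>n. A (Suc n) (Suc k) * X k j)"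
    unfolding lt_mult_def by (subst sum.atMost_Suc_shift) (simp add: shift_down_def)
  also have "\<dots> = lt_mult A X n j + lt_mult (shift_down A) X n j"
    by (simp add: col lt_mult_def distrib_right sum.distrib)
  finally show ?thesis
    using Suc by (simp add: lt_mult_shift_down_left[OF lt] shift_down_def)
qed (simp add: lt_mult_def shift_down_def)

lemma unitri_inv_shift_recurrence:
  assumes lt: "lower_tri A" and diag: "\<And>i. A i i = 1"
    and col: "\<And>n k. A (Suc n) (Suc k) = A n k + shift_down A n k"
  shows "unitri_inv A (Suc i) (Suc m) + unitri_inv A (Suc i) (Suc (Suc m)) = unitri_inv A i m"
proof -
  let ?B = "unitri_inv A"
  have AB: "lt_mult A ?B = id_mat"
    by (rule lt_mult_unitri_inv_right[of A, OF diag])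
  have "lt_mult A (\<lambda>p m. ?B p (Suc m) + ?B p (Suc (Suc m))) i m
      = lt_mult A (shift_down ?B) i m" for i m
    using lt_mult_column_shift[of A "\<lambda>p m. ?B p (Suc m)"]
    by (simp add: lt_mult_add_right lt_mult_column_shift lt_mult_shift_down_right[OF lt col]
        AB shift_down_id_mat)
  then have "lt_mult A (\<lambda>p m. ?B p (Suc m) + ?B p (Suc (Suc m))) = lt_mult A (shift_down ?B)"
    by (intro ext)
  then have "(\<lambda>p m. ?B p (Suc m) + ?B p (Suc (Suc m))) = shift_down ?B"
    by (rule lt_mult_left_cancel[of A, OF diag])
  from fun_cong[OF fun_cong[OF this, of "Suc i"], of m]
  show ?thesis by (simp add: shift_down_def)
qed

lemma riordan_x_one_plus_x:
  fixes g :: "'a::comm_ring_1 fps"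
  shows "riordan g (fps_X * (1 + fps_X)) i j
    = (if i < j then 0 else fps_nth (g * (1 + fps_X) ^ j) (i - j))"
proof -
  have "g * (fps_X * (1 + fps_X)) ^ j = fps_X ^ j * (g * (1 + fps_X) ^ j)"
    by (simp only: power_mult_distrib mult_ac)
  then show ?thesis unfolding riordan_def by (simp only: fps_X_power_mult_nth)
qed

lemma lower_tri_riordan_x_one_plus_x: "lower_tri (riordan g (fps_X * (1 + fps_X)))"
  by (simp add: lower_tri_def riordan_x_one_plus_x)

lemma riordan_x_one_plus_x_diag:
  "fps_nth g 0 = 1 \<Longrightarrow> riordan g (fps_X * (1 + fps_X)) i i = 1"
  by (simp add: riordan_x_one_plus_x fps_power_zeroth)

lemma riordan_x_one_plus_x_column_recurrence:
  fixes g :: "'a::comm_ring_1 fps"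
  defines "A \<equiv> riordan g (fps_X * (1 + fps_X))"
  shows "A (Suc n) (Suc k) = A n k + shift_down A n k"
proof -
  let ?c = "g * (fps_X * (1 + fps_X)) ^ k"
  have "g * (fps_X * (1 + fps_X)) ^ Suc k = fps_X * ?c + fps_X * (fps_X * ?c)"
    by (simp only: power_Suc distrib_left distrib_right mult_1_left mult_1_right mult_ac)
  then show ?thesis
    unfolding A_def riordan_def shift_down_def by (cases n) simp_all
qed

lemma riordan_one_neg_X:
  "riordan (1::'a::comm_ring_1 fps) (- fps_X) i j = (if i = j then (-1) ^ j else 0)"
proof -
  have "(- fps_X :: 'a fps) ^ j = fps_const ((-1) ^ j) * fps_X ^ j"
    by (induction j) (simp_all add: mult_ac flip: fps_const_neg)
  then show ?thesis unfolding riordan_def by (simp del: fps_const_power)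
qed

lemma lt_mult_sign_conjugate:
  fixes B :: "nat \<Rightarrow> nat \<Rightarrow> 'a::comm_ring_1"
  assumes lt: "lower_tri B"
  defines "D \<equiv> riordan (1::'a fps) (- fps_X)"
  shows "lt_mult (lt_mult D B) D i j = (-1) ^ (i + j) * B i j"
proof -
  have D_entry: "D i j = (if i = j then (-1) ^ j else 0)" for i j
    by (simp add: D_def riordan_one_neg_X)
  have DB: "lt_mult D B i k = (-1) ^ i * B i k" for i k
  proof -
    have "lt_mult D B i k = (\<Sum>l\<le>i. if l = i then (-1) ^ i * B i k else 0)"
      unfolding lt_mult_def by (intro sum.cong) (auto simp: D_entry)
    then show ?thesis by simp
  qed
  have "lt_mult (lt_mult D B) D i j = (\<Sum>l\<le>i. if l = j then (-1) ^ (i + j) * B i j else 0)"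
    unfolding lt_mult_def[of _ D]
    by (intro sum.cong) (auto simp: DB D_entry power_add)
  also have "\<dots> = (-1) ^ (i + j) * B i j"
    using lt by (auto simp: lower_tri_def)
  finally show ?thesis .
qed

lemma telescope_along_row:
  fixes M :: "nat \<Rightarrow> nat \<Rightarrow> 'a::comm_monoid_add"
  assumes rec: "\<And>i m. M (Suc i) (Suc m) = M i m + M (Suc i) (Suc (Suc m))"
    and above_diag: "\<And>i. M i (Suc i) = 0"
  shows "1 \<le> j \<Longrightarrow> j \<le> i \<Longrightarrow> M i (i - j + 1) = (\<Sum>k=1..j. M (i - 1) (i - k))"
proof (induction j)
  case (Suc j)
  obtain n where n: "i = Suc n" using Suc.prems by (cases i) auto
  show ?case
  proof (cases "j = 0")
    case True
    then show ?thesis using n rec[of n n] above_diag[of "Suc n"] by simp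
  next
    case False
    have "M i (i - Suc j + 1) = M n (n - j) + M i (i - j + 1)"
      using rec[of n "n - j"] Suc.prems n by (simp add: Suc_diff_Suc Suc_diff_le)
    then show ?thesis using Suc False n by (simp add: Suc_diff_le add.commute)
  qed
qed simp

lemma conjugated_inverse_row_sums:
  fixes g :: "'a::comm_ring_1 fps" and M :: "nat \<Rightarrow> nat \<Rightarrow> 'a"
  assumes g0: "fps_nth g 0 = 1"
    and M: "M = lt_mult (lt_mult (riordan 1 (- fps_X))
                  (mat_inv (riordan g (fps_X * (1 + fps_X))))) (riordan 1 (- fps_X))"
  shows "1 \<le> j \<Longrightarrow> j \<le> i \<Longrightarrow> M i (i - j + 1) = (\<Sum>k=1..j. M (i - 1) (i - k))"
proof (rule telescope_along_row)
  let ?A = "riordan g (fps_X * (1 + fps_X))"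
  note A_props = lower_tri_riordan_x_one_plus_x riordan_x_one_plus_x_diag[OF g0]
  have M_eq: "M i j = (-1) ^ (i + j) * unitri_inv ?A i j" for i j
    unfolding M mat_inv_eq_unitri_inv[OF A_props]
    by (rule lt_mult_sign_conjugate[OF lower_tri_unitri_inv])
  show "M (Suc i) (Suc m) = M i m + M (Suc i) (Suc (Suc m))" for i m
    unfolding M_eq unitri_inv_shift_recurrence[OF A_props
        riordan_x_one_plus_x_column_recurrence, of i m, symmetric]
    by (simp add: algebra_simps)
  show "M i (Suc i) = 0" for i
    using lower_tri_unitri_inv[of ?A] by (simp add: M_eq lower_tri_def)
qed

theorem corollary3p3:
  fixes D FS LS r q :: "nat \<Rightarrow> nat \<Rightarrow> int"
  assumes "D = riordan 1 (- fps_X)"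
    and "FS = riordan 1 (fps_X * (1 + fps_X))"
    and "LS = riordan (1 + 2 * fps_X) (fps_X * (1 + fps_X))"
    and "r = lt_mult (lt_mult D (mat_inv FS)) D"
    and "q = lt_mult (lt_mult D (mat_inv LS)) D"
  shows "\<forall>i j. 1 \<le> j \<and> j \<le> i \<longrightarrow>
           r i (i - j + 1) = (\<Sum>k=1..j. r (i - 1) (i - k)) \<and>
           q i (i - j + 1) = (\<Sum>k=1..j. q (i - 1) (i - k))"
  using conjugated_inverse_row_sums[of 1 r] conjugated_inverse_row_sums[of "1 + 2 * fps_X" q]
  by (simp add: assms)

end
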